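(* For integers $s,t\ge0$ let $m_{i,j}^{s,t}=\int_{(0,1)^2}\frac{x^{s+i}y^{s+j}}{x+y}\left(\frac{1-x}{1+x}\right)^t\left(\frac{1-y}{1+y}\right)^tdx\,dy$, $\phi_i^{s,t}=\sqrt2\int_0^1\frac{x^{s+i}}{1+x}\left(\frac{1-x}{1+x}\right)^tdx$, $\tau_n^{s,t}=\det(m_{i,j}^{s,t})_{i,j=0}^{n-1}$ ($\tau_0^{s,t}=1$), and $$\sigma_n^{s,t}=\det\begin{pmatrix} m_{0,0}^{s,t}&\cdots&m_{0,n-1}^{s,t}&\phi_0^{s,t}\\ \vdots&&\vdots&\vdots\\ m_{n,0}^{s,t}&\cdots&m_{n,n-1}^{s,t}&\phi_n^{s,t}\end{pmatrix}\quad(n\ge0),$$ and let $P_n^{s,t}(x)=\frac{1}{\tau_n^{s,t}}\det\begin{pmatrix} m_{0,0}^{s,t}&\cdots&m_{0,n-1}^{s,t}&1\\ \vdots&&\vdots&\vdots\\ m_{n,0}^{s,t}&\cdots&m_{n,n-1}^{s,t}&x^n\end{pmatrix}$, $P_0^{s,t}=1$. Then for every $n\ge1$ and $s,t\ge0$ with $\sigma_{n-1}^{s,t}\neq0$, $$P_n^{s,t+1}(x)+d_n^{s,t}P_{n-1}^{s,t+1}(x)=P_n^{s,t}(x)+e_n^{s,t}P_{n-1}^{s,t}(x),$$ where $$d_n^{s,t}=-\frac{\sigma_n^{s,t}\tau_{n-1}^{s,t+1}}{\sigma_{n-1}^{s,t}\tau_n^{s,t+1}},\qquad e_n^{s,t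}=-\frac{\sigma_n^{s,t}\tau_{n-1}^{s,t}}{\sigma_{n-1}^{s,t}\tau_n^{s,t}}.$$
   Context: Here $m_{i,j}^{s,t}=\langle x^i,y^j\rangle_{s,t}$ for the bilinear form $\langle f,g\rangle_{s,t}=\int_{(0,1)^2}\frac{x^sy^s}{x+y}f(x)g(y)\left(\frac{1-x}{1+x}\right)^t\left(\frac{1-y}{1+y}\right)^tdx\,dy$, and $\phi_i^{s,t}=\mathcal L_{s,t}(x^i)$ for the functional $\mathcal L_{s,t}(f)=\sqrt2\int_0^1\frac{x^s}{1+x}f(x)\left(\frac{1-x}{1+x}\right)^tdx$. The determinants $\tau_n^{s,t}$ are positive; $P_n^{s,t}$ is the monic Cauchy–Jacobi bi-orthogonal polynomial of degree $n$. The condition $\sigma_{n-1}^{s,t}\ne0$ is only what is needed for the coefficients to be defined. *)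

theory Defs
  imports "HOL-Analysis.Analysis" "Jordan_Normal_Form.Determinant"
begin

definition mom :: "nat \<Rightarrow> nat \<Rightarrow> nat \<Rightarrow> nat \<Rightarrow> real" where
  "mom s t i j = (LINT p : {0<..<1::real} \<times> {0<..<1::real} | lborel.
      (fst p ^ (s + i) * snd p ^ (s + j) / (fst p + snd p))
      * ((1 - fst p) / (1 + fst p)) ^ t * ((1 - snd p) / (1 + snd p)) ^ t)"

definition phi :: "nat \<Rightarrow> nat \<Rightarrow> nat \<Rightarrow> real" where
  "phi s t i = sqrt 2 * (LINT x : {0<..<1::real} | lborel.
      x ^ (s + i) / (1 + x) * ((1 - x) / (1 + x)) ^ t)"

definition tau :: "nat \<Rightarrow> nat \<Rightarrow> nat \<Rightarrow> real" where
  "tau s t n = Determinant.det (Matrix.mat n n (\<lambda>(i, j). mom s t i j))"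

definition sigma :: "nat \<Rightarrow> nat \<Rightarrow> nat \<Rightarrow> real" where
  "sigma s t n = Determinant.det (Matrix.mat (Suc n) (Suc n)
      (\<lambda>(i, j). if j < n then mom s t i j else phi s t i))"

definition Pn :: "nat \<Rightarrow> nat \<Rightarrow> nat \<Rightarrow> real \<Rightarrow> real" where
  "Pn s t n x = (if n = 0 then 1 else
      Determinant.det (Matrix.mat (Suc n) (Suc n)
        (\<lambda>(i, j). if j < n then mom s t i j else x ^ i)) / tau s t n)"

definition dcoef :: "nat \<Rightarrow> nat \<Rightarrow> nat \<Rightarrow> real" where
  "dcoef s t n = - (sigma s t n * tau s (Suc t) (n - 1)) / (sigma s t (n - 1) * tau s (Suc t) n)"

definition ecoef :: "nat \<Rightarrow> nat \<Rightarrow> nat \<Rightarrow> real" where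
  "ecoef s t n = - (sigma s t n * tau s t (n - 1)) / (sigma s t (n - 1) * tau s t n)"

end

(*
  Write det [F | w] for the determinant of the (n+1) x (n+1) matrix whose first n columns are
  those of F and whose last column is w. Then P_n = det [M | (x^i)] / tau_n and
  sigma_n = det [M | phi] for the moment matrix M = M^{s,t}.

  With c(x) = (1 - x)/(1 + x), the kernel splits as 1/(x+y) = c(x) c(y)/(x+y) + 2/((1+x)(1+y)),
  so M^{s,t+1} = M^{s,t} - phi phi^T. Consequently bordering by phi gives the same determinant
  for M^{s,t} and M^{s,t+1}, while bordering M^{s,t+1} by the j-th column of M^{s,t} gives
  phi_j sigma. Both sides of the recurrence are linear in the border column w; their difference
  does not involve w_n (the P_n are monic) and is annihilated by the first n-1 columns of M^{s,t}
  and by phi. Since sigma_{n-1} is nonzero, these n columns together with the last unit vector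
  form a basis, so the difference is 0.

  The tau_n are nonzero: telescoping the rank-one update and using M^{s,t} -> 0 as t -> oo writes
  the quadratic form of M^{s,t} at a vector a as the sum over k >= t of (sum_i a_i phi_i^{s,k})^2.
  If it vanishes, g(x) = sum_i a_i x^{s+i}/(1+x) is orthogonal on [0,1] to all c^k with k >= t.
  As c is an involution, g (1+c)^D is a polynomial in c, hence the integral of g^2 c^t (1+c)^D
  vanishes and g = 0.
*)
theory Submission
  imports Defs "HOL-Computational_Algebra.Polynomial"
begin

section \<open>Bordered determinants\<close>

definition bordered_mat :: "(nat \<Rightarrow> nat \<Rightarrow> 'a) \<Rightarrow> nat \<Rightarrow> (nat \<Rightarrow> 'a) \<Rightarrow> ('a :: comm_ring_1) mat" where
  "bordered_mat F n v = Matrix.mat (Suc n) (Suc n) (\<lambda>(i, j). if j < n then F i j else v i)"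

(* Extended by 0 beyond the last row, so that expansions of bordered determinants of different
   orders can be summed over one common index range. *)
definition bordered_cofactor :: "(nat \<Rightarrow> nat \<Rightarrow> 'a :: comm_ring_1) \<Rightarrow> nat \<Rightarrow> nat \<Rightarrow> 'a" where
  "bordered_cofactor F n i = (if i \<le> n then cofactor (bordered_mat F n (\<lambda>_. 0)) i n else 0)"

definition leading_minor :: "(nat \<Rightarrow> nat \<Rightarrow> 'a :: comm_ring_1) \<Rightarrow> nat \<Rightarrow> 'a" where
  "leading_minor F n = det (Matrix.mat n n (\<lambda>(i, j). F i j))"

lemma dim_bordered_mat [simp]:
  "dim_row (bordered_mat F n v) = Suc n" "dim_col (bordered_mat F n v) = Suc n"
  by (simp_all add: bordered_mat_def)

lemma bordered_mat_carrier [simp]: "bordered_mat F n v \<in> carrier_mat (Suc n) (Suc n)"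
  by (simp add: carrier_matI)

lemma cofactor_bordered_mat_last:
  assumes "i \<le> n"
  shows "cofactor (bordered_mat F n v) i n = bordered_cofactor F n i"
proof -
  have "mat_delete (bordered_mat F n v) i n = mat_delete (bordered_mat F n (\<lambda>_. 0)) i n"
    by (auto simp: mat_delete_def bordered_mat_def)
  then show ?thesis
    using assms by (simp add: bordered_cofactor_def cofactor_def)
qed

lemma det_bordered_mat:
  assumes "Suc n \<le> N"
  shows "det (bordered_mat F n w) = (\<Sum>i<N. w i * bordered_cofactor F n i)"
proof -
  have "det (bordered_mat F n w) = (\<Sum>i<Suc n. bordered_mat F n w $$ (i, n) * cofactor (bordered_mat F n w) i n)"
    using laplace_expansion_column[OF bordered_mat_carrier[of F n w], of n] by simp
  also have "\<dots> = (\<Sum>i<Suc n. w i * bordered_cofactor F n i)"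
    by (intro sum.cong refl) (subst cofactor_bordered_mat_last; simp add: bordered_mat_def)
  also have "\<dots> = (\<Sum>i<N. w i * bordered_cofactor F n i)"
    using assms by (intro sum.mono_neutral_left) (auto simp: bordered_cofactor_def)
  finally show ?thesis .
qed

lemma bordered_cofactor_last: "bordered_cofactor F n n = leading_minor F n"
  unfolding bordered_cofactor_def leading_minor_def cofactor_def
  by (simp, intro arg_cong[where f = det] eq_matI) (auto simp: mat_delete_def bordered_mat_def)

lemma det_bordered_mat_col: "j < n \<Longrightarrow> det (bordered_mat F n (\<lambda>i. F i j)) = 0"
  by (rule det_identical_columns[OF bordered_mat_carrier, of j n]) (auto simp: bordered_mat_def)

lemma det_bordered_mat_rank_one_update:
  assumes G: "\<And>i j. G i j = F i j - v i * v j"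
  shows "det (bordered_mat G n v) = det (bordered_mat F n v)"
proof -
  define U :: "'a mat" where
    "U = Matrix.mat (Suc n) (Suc n) (\<lambda>(i, j). if i = j then 1 else if i = n then - v j else 0)"
  have U: "U \<in> carrier_mat (Suc n) (Suc n)"
    by (simp add: U_def)
  have "det U = prod_list (diag_mat U)"
    by (rule det_lower_triangular[OF _ U]) (auto simp: U_def)
  also have "diag_mat U = map (\<lambda>_. 1) [0..<Suc n]"
    unfolding diag_mat_def U_def by auto
  also have "prod_list \<dots> = 1"
    by (simp add: map_replicate_const)
  finally have det_U: "det U = 1" .
  \<comment> \<open>Right multiplication by \<open>U\<close> subtracts \<open>v j\<close> times the last column from column \<open>j\<close>.\<close>
  have "bordered_mat G n v = bordered_mat F n v * U"
  proof (rule eq_matI)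
    fix i j assume "i < dim_row (bordered_mat F n v * U)" "j < dim_col (bordered_mat F n v * U)"
    then have i: "i < Suc n" and j: "j < Suc n"
      using U by auto
    have "(bordered_mat F n v * U) $$ (i, j) = (\<Sum>k<Suc n. bordered_mat F n v $$ (i, k) * U $$ (k, j))"
      using i j U by (simp add: scalar_prod_def atLeast0LessThan bordered_mat_def)
    also have "\<dots> = (\<Sum>k\<in>{j, n}. bordered_mat F n v $$ (i, k) * U $$ (k, j))"
      using i j by (intro sum.mono_neutral_right) (auto simp: U_def)
    also have "\<dots> = bordered_mat G n v $$ (i, j)"
      using i j by (cases "j = n") (auto simp: U_def bordered_mat_def G)
    finally show "bordered_mat G n v $$ (i, j) = (bordered_mat F n v * U) $$ (i, j)" ..
  qed (use U in auto)
  then show ?thesis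
    by (simp add: det_mult[OF bordered_mat_carrier U] det_U)
qed

lemma det_bordered_mat_rank_one_update_col:
  assumes G: "\<And>i j. G i j = F i j - v i * v j" and j: "j < n"
  shows "det (bordered_mat G n (\<lambda>i. F i j)) = v j * det (bordered_mat F n v)"
proof -
  have "(\<lambda>i. F i j) = (\<lambda>i. G i j + v j * v i)"
    by (simp add: G fun_eq_iff)
  then have "det (bordered_mat G n (\<lambda>i. F i j))
      = det (bordered_mat G n (\<lambda>i. G i j)) + v j * det (bordered_mat G n v)"
    by (simp add: det_bordered_mat[of n "Suc n"] distrib_left distrib_right sum.distrib sum_distrib_left mult.assoc)
  then show ?thesis
    using det_bordered_mat_col[OF j] det_bordered_mat_rank_one_update[OF G] by simp
qed

lemma det_ne_zero_rows_independent:
  fixes A :: "'a :: field mat"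
  assumes A: "A \<in> carrier_mat n n" and det_A: "det A \<noteq> 0"
    and comb: "\<And>j. j < n \<Longrightarrow> (\<Sum>i<n. A $$ (i, j) * c i) = 0"
    and "i < n"
  shows "c i = 0"
proof -
  have "transpose_mat A *\<^sub>v vec n c = 0\<^sub>v n"
    using A comb by (intro eq_vecI) (auto simp: scalar_prod_def atLeast0LessThan)
  moreover have "transpose_mat A \<in> carrier_mat n n"
    using A by simp
  moreover have "det (transpose_mat A) \<noteq> 0"
    using det_A det_transpose[OF A] by simp
  ultimately have "vec n c = 0\<^sub>v n"
    using det_0_iff_vec_prod_zero_field[of "transpose_mat A" n] vec_carrier by blast
  then show ?thesis
    using \<open>i < n\<close> by (metis index_vec index_zero_vec(1))
qed

lemma bordered_det_rank_one_recurrence: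
  fixes F G :: "nat \<Rightarrow> nat \<Rightarrow> 'a :: field"
  assumes G: "\<And>i j. G i j = F i j - v i * v j"
    and F_minor: "leading_minor F (Suc m) \<noteq> 0" and G_minor: "leading_minor G (Suc m) \<noteq> 0"
    and border: "det (bordered_mat F m v) \<noteq> 0"
  defines "c \<equiv> det (bordered_mat F (Suc m) v) / det (bordered_mat F m v)"
  shows "det (bordered_mat G (Suc m) w) / leading_minor G (Suc m)
           - c / leading_minor G (Suc m) * det (bordered_mat G m w)
       = det (bordered_mat F (Suc m) w) / leading_minor F (Suc m)
           - c / leading_minor F (Suc m) * det (bordered_mat F m w)"
proof -
  define L where "L w =
        det (bordered_mat G (Suc m) w) / leading_minor G (Suc m)
      - c / leading_minor G (Suc m) * det (bordered_mat G m w)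
    - (det (bordered_mat F (Suc m) w) / leading_minor F (Suc m)
      - c / leading_minor F (Suc m) * det (bordered_mat F m w))"
    for w
  define V where "V i =
        bordered_cofactor G (Suc m) i / leading_minor G (Suc m)
      - c / leading_minor G (Suc m) * bordered_cofactor G m i
    - (bordered_cofactor F (Suc m) i / leading_minor F (Suc m)
      - c / leading_minor F (Suc m) * bordered_cofactor F m i)"
    for i
  have det_expand: "det (bordered_mat H k w) = (\<Sum>i<Suc (Suc m). w i * bordered_cofactor H k i)"
    if "k \<le> Suc m" for H :: "nat \<Rightarrow> nat \<Rightarrow> 'a" and k w
    using that by (intro det_bordered_mat) simp
  have L_sum: "L w = (\<Sum>i<Suc (Suc m). w i * V i)" for w
  proof -
    have "L w =
        (\<Sum>i<Suc (Suc m). w i * bordered_cofactor G (Suc m) i) / leading_minor G (Suc m)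
      - c / leading_minor G (Suc m) * (\<Sum>i<Suc (Suc m). w i * bordered_cofactor G m i)
      - ((\<Sum>i<Suc (Suc m). w i * bordered_cofactor F (Suc m) i) / leading_minor F (Suc m)
      - c / leading_minor F (Suc m) * (\<Sum>i<Suc (Suc m). w i * bordered_cofactor F m i))"
      by (simp only: L_def det_expand le_refl le_SucI)
    also have "\<dots> = (\<Sum>i<Suc (Suc m).
          w i * bordered_cofactor G (Suc m) i / leading_minor G (Suc m)
        - c / leading_minor G (Suc m) * (w i * bordered_cofactor G m i)
        - (w i * bordered_cofactor F (Suc m) i / leading_minor F (Suc m)
        - c / leading_minor F (Suc m) * (w i * bordered_cofactor F m i)))"
      by (simp only: sum_subtractf sum_divide_distrib sum_distrib_left)
    also have "\<dots> = (\<Sum>i<Suc (Suc m). w i * V i)"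
      by (intro sum.cong refl) (simp add: V_def right_diff_distrib mult.left_commute)
    finally show ?thesis .
  qed
  have V_last: "V (Suc m) = 0"
    using F_minor G_minor by (simp add: V_def bordered_cofactor_last bordered_cofactor_def)
  have L_col: "L (\<lambda>i. F i j) = 0" if "j < m" for j
  proof -
    have "det (bordered_mat G (Suc m) (\<lambda>i. F i j)) = v j * det (bordered_mat F (Suc m) v)"
      "det (bordered_mat G m (\<lambda>i. F i j)) = v j * det (bordered_mat F m v)"
      using that by (auto intro: det_bordered_mat_rank_one_update_col[OF G])
    moreover have "det (bordered_mat F (Suc m) (\<lambda>i. F i j)) = 0" "det (bordered_mat F m (\<lambda>i. F i j)) = 0"
      using that by (simp_all add: det_bordered_mat_col)
    ultimately show ?thesis
      using G_minor border by (simp add: L_def c_def)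
  qed
  have L_border: "L v = 0"
    using G_minor F_minor border by (simp add: L_def c_def det_bordered_mat_rank_one_update[OF G])
  \<comment> \<open>\<open>V\<close> is orthogonal to every column of the nonsingular \<open>bordered_mat F m v\<close>.\<close>
  have V_zero: "V i = 0" if "i < Suc m" for i
  proof (rule det_ne_zero_rows_independent[OF bordered_mat_carrier border _ that])
    fix j assume "j < Suc m"
    have "(\<Sum>i<Suc m. bordered_mat F m v $$ (i, j) * V i) = L (\<lambda>i. if j < m then F i j else v i)"
      using \<open>j < Suc m\<close> by (simp add: L_sum V_last bordered_mat_def)
    then show "(\<Sum>i<Suc m. bordered_mat F m v $$ (i, j) * V i) = 0"
      by (cases "j < m") (simp_all add: L_col L_border)
  qed
  have "L w = 0"
    unfolding L_sum using V_zero V_last by (intro sum.neutral) (auto simp: less_Suc_eq)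
  then show ?thesis
    by (simp add: L_def)
qed

section \<open>Moments as integrals\<close>

definition cayley :: "real \<Rightarrow> real" where
  "cayley x = (1 - x) / (1 + x)"

lemma cayley_in_unit_interval: "0 < x \<Longrightarrow> x < 1 \<Longrightarrow> 0 < cayley x \<and> cayley x < 1"
  by (simp add: cayley_def)

lemma one_over_add_cayley_split:
  fixes x y :: real
  assumes "x + y \<noteq> 0" "1 + x \<noteq> 0" "1 + y \<noteq> 0"
  shows "1 / (x + y) = cayley x * cayley y / (x + y) + 2 / ((1 + x) * (1 + y))"
proof -
  define D where "D = (1 + x) * (1 + y)"
  have "D \<noteq> 0"
    using assms by (simp add: D_def)
  moreover have "cayley x * cayley y = (D - 2 * (x + y)) / D"
    by (simp add: cayley_def D_def algebra_simps)
  ultimately show ?thesis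
    using assms by (simp add: D_def[symmetric] field_simps)
qed

abbreviation open_unit_square :: "(real \<times> real) set" where
  "open_unit_square \<equiv> {0<..<1} \<times> {0<..<1}"

definition mom_integrand :: "nat \<Rightarrow> nat \<Rightarrow> nat \<Rightarrow> nat \<Rightarrow> real \<times> real \<Rightarrow> real" where
  "mom_integrand s t i j p =
     fst p ^ (s + i) * snd p ^ (s + j) / (fst p + snd p) * cayley (fst p) ^ t * cayley (snd p) ^ t"

definition phi_integrand :: "nat \<Rightarrow> nat \<Rightarrow> nat \<Rightarrow> real \<Rightarrow> real" where
  "phi_integrand s t i x = x ^ (s + i) / (1 + x) * cayley x ^ t"

lemma mom_eq_set_integral: "mom s t i j = (LINT p : open_unit_square | lborel. mom_integrand s t i j p)"
  by (simp add: mom_def mom_integrand_def cayley_def)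

lemma phi_eq_set_integral: "phi s t i = sqrt 2 * (LINT x : {0<..<1} | lborel. phi_integrand s t i x)"
  by (simp add: phi_def phi_integrand_def cayley_def)

lemma continuous_on_phi_integrand: "continuous_on {0..1} (phi_integrand s t i)"
  unfolding phi_integrand_def cayley_def by (intro continuous_intros) auto

lemma set_integral_Ioo_eq_integral:
  fixes f :: "real \<Rightarrow> real"
  assumes "continuous_on {a..b} f"
  shows "set_integrable lborel {a<..<b} f" and "(LINT x : {a<..<b} | lborel. f x) = integral {a..b} f"
proof -
  have "set_integrable lborel {a..b} f"
    using assms unfolding set_integrable_def by (rule borel_integrable_compact[OF compact_Icc])
  then show int: "set_integrable lborel {a<..<b} f"
    by (rule set_integrable_subset) auto
  show "(LINT x : {a<..<b} | lborel. f x) = integral {a..b} f"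
    using set_borel_integral_eq_integral(2)[OF int] integral_open_interval_real[of a b f] by simp
qed

lemma phi_eq_integral: "phi s t i = sqrt 2 * integral {0..1} (phi_integrand s t i)"
  using phi_eq_set_integral set_integral_Ioo_eq_integral(2)[OF continuous_on_phi_integrand] by simp

lemma integrable_lborel_product:
  fixes g h :: "real \<Rightarrow> real"
  assumes g: "integrable lborel g" and h: "integrable lborel h"
  shows "integrable (lborel :: (real \<times> real) measure) (\<lambda>p. g (fst p) * h (snd p))"
    and "(\<integral>p. g (fst p) * h (snd p) \<partial>(lborel :: (real \<times> real) measure))
           = integral\<^sup>L lborel g * integral\<^sup>L lborel h"
proof -
  have [measurable]: "g \<in> borel_measurable lborel" "h \<in> borel_measurable lborel"
    using g h by auto
  have int: "integrable (lborel \<Otimes>\<^sub>M lborel) (\<lambda>p. g (fst p) * h (snd p))"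
  proof (rule lborel_pair.Fubini_integrable)
    have "integrable lborel (\<lambda>x. norm (g x) * (\<integral>y. norm (h y) \<partial>lborel))"
      using g by (intro integrable_mult_left) auto
    then show "integrable lborel (\<lambda>x. \<integral>y. norm (g (fst (x, y)) * h (snd (x, y))) \<partial>lborel)"
      by (simp add: abs_mult)
  qed (use h in simp_all)
  then show "integrable (lborel :: (real \<times> real) measure) (\<lambda>p. g (fst p) * h (snd p))"
    by (simp add: lborel_prod)
  have "(\<integral>p. g (fst p) * h (snd p) \<partial>(lborel \<Otimes>\<^sub>M lborel)) = (\<integral>x. (\<integral>y. g x * h y \<partial>lborel) \<partial>lborel)"
    using lborel_pair.integral_fst'[OF int] by simp
  then show "(\<integral>p. g (fst p) * h (snd p) \<partial>(lborel :: (real \<times> real) measure))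
      = integral\<^sup>L lborel g * integral\<^sup>L lborel h"
    by (simp add: lborel_prod)
qed

lemma set_integrable_lborel_product:
  fixes g h :: "real \<Rightarrow> real"
  assumes g: "set_integrable lborel S g" and h: "set_integrable lborel T h"
  shows "set_integrable lborel (S \<times> T) (\<lambda>p. g (fst p) * h (snd p))"
    and "(LINT p : S \<times> T | lborel. g (fst p) * h (snd p))
           = (LINT x : S | lborel. g x) * (LINT y : T | lborel. h y)"
proof -
  define G where "G x = indicator S x * g x" for x
  define H where "H x = indicator T x * h x" for x
  have G: "integrable lborel G" and H: "integrable lborel H"
    using g h unfolding set_integrable_def G_def H_def by simp_all
  have eq: "(\<lambda>p. indicator (S \<times> T) p *\<^sub>R (g (fst p) * h (snd p))) = (\<lambda>p. G (fst p) * H (snd p))"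
    by (auto simp: G_def H_def indicator_times fun_eq_iff split: split_indicator)
  show "set_integrable lborel (S \<times> T) (\<lambda>p. g (fst p) * h (snd p))"
    unfolding set_integrable_def eq by (rule integrable_lborel_product(1)[OF G H])
  show "(LINT p : S \<times> T | lborel. g (fst p) * h (snd p))
      = (LINT x : S | lborel. g x) * (LINT y : T | lborel. h y)"
    unfolding set_lebesgue_integral_def eq using integrable_lborel_product(2)[OF G H]
    by (simp add: G_def[abs_def] H_def[abs_def])
qed

lemma set_integrable_powr_neg_half: "set_integrable lborel {0<..<1::real} (\<lambda>x. x powr (-1/2))"
proof -
  have "(\<lambda>x::real. x powr (-1/2)) integrable_on {0<..1}"
    by (rule integrable_on_powr_from_0') auto
  then have "set_integrable lebesgue {0<..1::real} (\<lambda>x. x powr (-1/2))"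
    by (rule nonnegative_absolutely_integrable) auto
  then have "set_integrable lborel {0<..1::real} (\<lambda>x. x powr (-1/2))"
    unfolding set_integrable_def by (subst (asm) integrable_completion) measurable
  then show ?thesis
    by (rule set_integrable_subset) auto
qed

(* An integrable majorant of product form for the kernel 1/(x+y) on the unit square. *)
lemma one_over_add_le_powr_neg_half:
  fixes x y :: real
  assumes "0 < x" "0 < y"
  shows "1 / (x + y) \<le> x powr (-1/2) * y powr (-1/2)"
proof -
  have "x powr (-1/2) * y powr (-1/2) = 1 / sqrt (x * y)"
    using assms by (simp add: powr_mult[symmetric] powr_minus_divide powr_half_sqrt real_sqrt_mult)
  moreover have "sqrt (x * y) \<le> x + y"
    using arith_geo_mean_sqrt[of x y] assms by simp
  ultimately show ?thesis
    using assms by (simp add: frac_le)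
qed

lemma mom_integrand_bound:
  assumes "p \<in> open_unit_square"
  shows "norm (mom_integrand s t i j p) \<le> fst p powr (-1/2) * snd p powr (-1/2)"
proof -
  obtain x y where p: "p = (x, y)" and x: "0 < x" "x < 1" and y: "0 < y" "y < 1"
    using assms by auto
  define c where "c = x ^ (s + i) * y ^ (s + j) * cayley x ^ t * cayley y ^ t"
  have "0 \<le> c" "c \<le> 1"
    using x y cayley_in_unit_interval[OF x] cayley_in_unit_interval[OF y]
    by (auto simp: c_def intro!: mult_le_one power_le_one)
  then have "norm (mom_integrand s t i j p) \<le> 1 / (x + y)"
    using x y by (simp add: mom_integrand_def p c_def[symmetric] divide_right_mono)
  also have "\<dots> \<le> x powr (-1/2) * y powr (-1/2)"
    using x(1) y(1) by (rule one_over_add_le_powr_neg_half)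
  finally show ?thesis
    by (simp add: p)
qed

lemma set_integrable_mom_integrand: "set_integrable lborel open_unit_square (mom_integrand s t i j)"
proof (rule set_integrable_bound[OF
    set_integrable_lborel_product(1)[OF set_integrable_powr_neg_half set_integrable_powr_neg_half]])
  have "(\<lambda>p. indicator open_unit_square p *\<^sub>R mom_integrand s t i j p) \<in> borel_measurable (lborel \<Otimes>\<^sub>M lborel)"
    unfolding mom_integrand_def cayley_def by measurable
  then show "set_borel_measurable lborel open_unit_square (mom_integrand s t i j)"
    unfolding set_borel_measurable_def by (simp add: lborel_prod)
  have "norm (mom_integrand s t i j p) \<le> norm (fst p powr (-1/2) * snd p powr (-1/2))"
    if "p \<in> open_unit_square" for p
    using mom_integrand_bound[OF that] by simp
  then show "AE p in lborel. p \<in> open_unit_square \<longrightarrow>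
      norm (mom_integrand s t i j p) \<le> norm (fst p powr (-1/2) * snd p powr (-1/2))"
    by simp
qed

lemma mom_integrand_Suc:
  assumes "p \<in> open_unit_square"
  shows "mom_integrand s t i j p
    = mom_integrand s (Suc t) i j p + 2 * (phi_integrand s t i (fst p) * phi_integrand s t j (snd p))"
proof -
  obtain x y where p: "p = (x, y)" and x: "0 < x" and y: "0 < y"
    using assms by auto
  have split: "1 / (x + y) = cayley x * cayley y / (x + y) + 2 / ((1 + x) * (1 + y))"
    using x y by (intro one_over_add_cayley_split) auto
  have "mom_integrand s t i j p = x ^ (s + i) * y ^ (s + j) * cayley x ^ t * cayley y ^ t * (1 / (x + y))"
    by (simp add: mom_integrand_def p)
  also have "\<dots> = mom_integrand s (Suc t) i j p + 2 * (phi_integrand s t i (fst p) * phi_integrand s t j (snd p))"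
    unfolding split by (simp add: mom_integrand_def phi_integrand_def p algebra_simps)
  finally show ?thesis .
qed

lemma mom_Suc: "mom s (Suc t) i j = mom s t i j - phi s t i * phi s t j"
proof -
  have phi_int: "set_integrable lborel {0<..<1} (phi_integrand s t k)" for k
    by (rule set_integral_Ioo_eq_integral(1)[OF continuous_on_phi_integrand])
  have "mom s t i j = (LINT p : open_unit_square | lborel.
      mom_integrand s (Suc t) i j p + 2 * (phi_integrand s t i (fst p) * phi_integrand s t j (snd p)))"
    unfolding mom_eq_set_integral
    by (rule set_lebesgue_integral_cong) (simp_all add: borel_open open_Times mom_integrand_Suc[of _ s t i j])
  also have "\<dots> = mom s (Suc t) i j
      + 2 * ((LINT x : {0<..<1} | lborel. phi_integrand s t i x) * (LINT x : {0<..<1} | lborel. phi_integrand s t j x))"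
    using set_integrable_mom_integrand set_integrable_lborel_product(1)[OF phi_int phi_int]
    by (simp add: mom_eq_set_integral set_integrable_lborel_product(2)[OF phi_int phi_int])
  also have "\<dots> = mom s (Suc t) i j + phi s t i * phi s t j"
    by (simp add: phi_eq_set_integral)
  finally show ?thesis
    by simp
qed

lemma mom_integrand_tendsto_zero:
  assumes "p \<in> open_unit_square"
  shows "(\<lambda>t. mom_integrand s t i j p) \<longlonglongrightarrow> 0"
proof -
  obtain x y where p: "p = (x, y)" and x: "0 < x" "x < 1" and y: "0 < y" "y < 1"
    using assms by auto
  have "0 < cayley x * cayley y" "cayley x * cayley y < 1 * 1"
    using cayley_in_unit_interval[OF x] cayley_in_unit_interval[OF y]
    by (simp, intro mult_strict_mono) auto
  then have "norm (cayley x * cayley y) < 1"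
    by simp
  moreover have "mom_integrand s t i j p = x ^ (s + i) * y ^ (s + j) / (x + y) * (cayley x * cayley y) ^ t" for t
    by (simp add: mom_integrand_def p power_mult_distrib)
  ultimately show ?thesis
    by (simp only:) (intro tendsto_mult_right_zero LIMSEQ_power_zero)
qed

lemma mom_tendsto_zero: "(\<lambda>t. mom s t i j) \<longlonglongrightarrow> 0"
proof -
  define f where "f t p = indicator open_unit_square p *\<^sub>R mom_integrand s t i j p" for t p
  define W where "W p = indicator open_unit_square p *\<^sub>R (fst p powr (-1/2) * snd p powr (-1/2))"
    for p :: "real \<times> real"
  have W: "integrable lborel W"
    using set_integrable_lborel_product(1)[OF set_integrable_powr_neg_half set_integrable_powr_neg_half]
    unfolding set_integrable_def W_def by simp
  have f: "f t \<in> borel_measurable lborel" for t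
    using set_integrable_mom_integrand unfolding set_integrable_def f_def by (rule borel_measurable_integrable)
  have lim: "AE p in lborel. (\<lambda>t. f t p) \<longlonglongrightarrow> 0"
    by (rule AE_I2) (auto simp: f_def mom_integrand_tendsto_zero split: split_indicator)
  have bound: "AE p in lborel. norm (f t p) \<le> W p" for t
  proof (rule AE_I2)
    fix p :: "real \<times> real"
    show "norm (f t p) \<le> W p"
      using mom_integrand_bound[of p s t i j] by (auto simp: f_def W_def split: split_indicator)
  qed
  have "(\<lambda>t. integral\<^sup>L lborel (f t)) \<longlonglongrightarrow> integral\<^sup>L lborel (\<lambda>p :: real \<times> real. 0 :: real)"
    using integral_dominated_convergence[OF borel_measurable_const f W lim bound] .
  then show ?thesis
    unfolding mom_eq_set_integral set_lebesgue_integral_def f_def[abs_def] by simp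
qed

section \<open>Non-vanishing of the Gram determinants\<close>

lemma mom_quadratic_form_sums:
  "(\<lambda>k. (\<Sum>i<N. c i * phi s (t + k) i)\<^sup>2) sums (\<Sum>i<N. \<Sum>j<N. c i * c j * mom s t i j)"
proof -
  define Q where "Q u = (\<Sum>i<N. \<Sum>j<N. c i * c j * mom s u i j)" for u
  define \<psi> where "\<psi> u = (\<Sum>i<N. c i * phi s u i)" for u
  have Q_Suc: "Q u = Q (Suc u) + (\<psi> u)\<^sup>2" for u
  proof -
    have "Q (Suc u) + (\<psi> u)\<^sup>2
        = (\<Sum>i<N. \<Sum>j<N. c i * c j * mom s (Suc u) i j + c i * phi s u i * (c j * phi s u j))"
      by (simp add: Q_def \<psi>_def power2_eq_square sum_product sum.distrib)
    also have "\<dots> = Q u"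
      by (simp add: Q_def mom_Suc algebra_simps)
    finally show ?thesis ..
  qed
  have partial_sums: "(\<Sum>k<K. (\<psi> (t + k))\<^sup>2) = Q t - Q (t + K)" for K
    by (induction K) (simp_all add: Q_Suc[of "t + _"])
  have "Q \<longlonglongrightarrow> (\<Sum>i<N. \<Sum>j<N. c i * c j * 0)"
    unfolding Q_def by (intro tendsto_intros mom_tendsto_zero)
  then have "(\<lambda>K. Q (t + K)) \<longlonglongrightarrow> 0"
    using LIMSEQ_ignore_initial_segment[of Q 0 t] by (simp add: add.commute)
  then have "(\<lambda>K. Q t - Q (t + K)) \<longlonglongrightarrow> Q t"
    using tendsto_diff[OF tendsto_const, of "\<lambda>K. Q (t + K)" 0 sequentially "Q t"] by simp
  then have "(\<lambda>k. (\<psi> (t + k))\<^sup>2) sums Q t"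
    unfolding sums_def partial_sums .
  then show ?thesis
    by (simp add: \<psi>_def Q_def)
qed

lemma integral_mult_poly_eq_0:
  fixes g h :: "real \<Rightarrow> real"
  assumes "continuous_on {a..b} g" "continuous_on {a..b} h"
    and moments: "\<And>k. integral {a..b} (\<lambda>x. g x * h x ^ (t + k)) = 0"
  shows "integral {a..b} (\<lambda>x. g x * h x ^ t * poly R (h x)) = 0"
proof -
  have "integral {a..b} (\<lambda>x. g x * h x ^ t * poly R (h x))
      = integral {a..b} (\<lambda>x. \<Sum>k\<le>degree R. coeff R k * (g x * h x ^ (t + k)))"
    by (simp add: poly_altdef sum_distrib_left power_add ac_simps)
  also have "\<dots> = (\<Sum>k\<le>degree R. integral {a..b} (\<lambda>x. coeff R k * (g x * h x ^ (t + k))))"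
  proof (rule integral_sum)
    fix k
    have "continuous_on {a..b} (\<lambda>x. coeff R k * (g x * h x ^ (t + k)))"
      by (intro continuous_intros assms(1,2))
    then show "(\<lambda>x. coeff R k * (g x * h x ^ (t + k))) integrable_on {a..b}"
      by (rule integrable_continuous_interval)
  qed simp
  also have "\<dots> = 0"
    by (simp add: moments)
  finally show ?thesis .
qed

lemma poly_cayley_transform:
  fixes q :: "real poly"
  obtains R where "\<And>x. x \<noteq> -1 \<Longrightarrow> poly R (cayley x) = poly q x / (1 + x) * (1 + cayley x) ^ degree q"
proof -
  define D where "D = degree q"
  \<comment> \<open>\<open>R a = (1 + a) ^ (D + 1) / 2 * poly q (cayley a)\<close>, cleared of denominators\<close>
  define R where "R = Polynomial.smult (1/2)
    ([:1, 1:] * (\<Sum>k\<le>D. Polynomial.smult (coeff q k) ([:1, -1:] ^ k * [:1, 1:] ^ (D - k))))"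
  have "poly R (cayley x) = poly q x / (1 + x) * (1 + cayley x) ^ D" if x: "x \<noteq> -1" for x
  proof -
    define a where "a = cayley x"
    have half: "(1 + a) / 2 = 1 / (1 + x)" and one_minus: "1 - a = x * (1 + a)"
      using x by (simp_all add: a_def cayley_def field_simps)
    have terms: "(1 - a) ^ k * (1 + a) ^ (D - k) = x ^ k * (1 + a) ^ D" if "k \<le> D" for k
    proof -
      have "(1 - a) ^ k * (1 + a) ^ (D - k) = x ^ k * ((1 + a) ^ k * (1 + a) ^ (D - k))"
        by (simp add: one_minus power_mult_distrib)
      also have "(1 + a) ^ k * (1 + a) ^ (D - k) = (1 + a) ^ D"
        using that by (simp flip: power_add)
      finally show ?thesis .
    qed
    have "poly R a = (1 + a) / 2 * (\<Sum>k\<le>D. coeff q k * ((1 - a) ^ k * (1 + a) ^ (D - k)))"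
      by (simp add: R_def poly_sum algebra_simps)
    also have "\<dots> = 1 / (1 + x) * (\<Sum>k\<le>D. coeff q k * x ^ k) * (1 + a) ^ D"
      by (simp add: half terms sum_distrib_right mult.assoc)
    also have "\<dots> = poly q x / (1 + x) * (1 + a) ^ D"
      by (simp add: poly_altdef D_def)
    finally show ?thesis
      by (simp add: a_def)
  qed
  then show ?thesis
    using that D_def by blast
qed

lemma poly_eq_0_if_vanishes_on_interval:
  fixes p :: "real poly"
  assumes "a < b" and vanish: "\<And>x. a < x \<Longrightarrow> x < b \<Longrightarrow> poly p x = 0"
  shows "p = 0"
proof (rule ccontr)
  assume "p \<noteq> 0"
  then have "finite {x. poly p x = 0}"
    by (rule poly_roots_finite)
  moreover have "{a<..<b} \<subseteq> {x. poly p x = 0}"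
    using vanish by auto
  ultimately show False
    using infinite_Ioo[OF \<open>a < b\<close>] finite_subset by blast
qed

lemma cayley_moments_eq_0_imp_poly_eq_0:
  fixes q :: "real poly"
  assumes moments: "\<And>k. integral {0..1} (\<lambda>x. poly q x / (1 + x) * cayley x ^ (t + k)) = 0"
  shows "q = 0"
proof -
  define g where "g x = poly q x / (1 + x)" for x :: real
  have cont_g: "continuous_on {0..1} g"
    unfolding g_def by (intro continuous_intros) auto
  have cont_cayley: "continuous_on {0..1} cayley"
    unfolding cayley_def by (intro continuous_intros) auto
  obtain R where R: "\<And>x. x \<noteq> -1 \<Longrightarrow> poly R (cayley x) = g x * (1 + cayley x) ^ degree q"
    using poly_cayley_transform[of q] unfolding g_def by blast
  define h where "h x = (g x)\<^sup>2 * cayley x ^ t * (1 + cayley x) ^ degree q" for x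
  have "integral {0..1} h = integral {0..1} (\<lambda>x. g x * cayley x ^ t * poly R (cayley x))"
    by (rule integral_cong) (simp add: h_def R power2_eq_square mult_ac)
  also have "\<dots> = 0"
    using moments by (intro integral_mult_poly_eq_0[OF cont_g cont_cayley]) (simp add: g_def)
  moreover have cont_h: "continuous_on {0..1} h"
    unfolding h_def by (intro continuous_intros cont_g cont_cayley)
  ultimately have "(h has_integral 0) {0..1}"
    using integrable_integral[OF integrable_continuous_interval[OF cont_h]] by simp
  then have h_zero: "h x = 0" if "0 < x" "x < 1" for x
    using that cont_h cayley_in_unit_interval
    by (intro has_integral_0_cbox_imp_0[of 0 1 h]) (auto simp: h_def less_imp_le)
  have "poly q x = 0" if "0 < x" "x < 1" for x
  proof -
    have "g x = 0"
      using h_zero[OF that] cayley_in_unit_interval[OF that] by (simp add: h_def)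
    then show ?thesis
      using that by (simp add: g_def)
  qed
  then show "q = 0"
    by (intro poly_eq_0_if_vanishes_on_interval[of 0 1]) auto
qed

lemma phi_combination_eq_integral:
  "(\<Sum>i<N. c i * phi s k i)
     = sqrt 2 * integral {0..1} (\<lambda>x. poly (\<Sum>i<N. monom (c i) (s + i)) x / (1 + x) * cayley x ^ k)"
proof -
  have "(\<Sum>i<N. c i * phi s k i) = sqrt 2 * (\<Sum>i<N. integral {0..1} (\<lambda>x. c i * phi_integrand s k i x))"
    by (simp add: phi_eq_integral sum_distrib_left mult_ac)
  also have "\<dots> = sqrt 2 * integral {0..1} (\<lambda>x. \<Sum>i<N. c i * phi_integrand s k i x)"
    by (subst integral_sum)
      (auto intro: integrable_continuous_interval continuous_on_mult_left continuous_on_phi_integrand)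
  also have "(\<lambda>x. \<Sum>i<N. c i * phi_integrand s k i x)
      = (\<lambda>x. poly (\<Sum>i<N. monom (c i) (s + i)) x / (1 + x) * cayley x ^ k)"
    by (simp add: fun_eq_iff phi_integrand_def poly_sum poly_monom sum_distrib_right sum_divide_distrib mult.assoc)
  finally show ?thesis .
qed

lemma phi_combination_eq_0_imp_coeff_eq_0:
  fixes c :: "nat \<Rightarrow> real"
  assumes vanish: "\<And>k. (\<Sum>i<N. c i * phi s (t + k) i) = 0" and "i < N"
  shows "c i = 0"
proof -
  define q :: "real poly" where "q = (\<Sum>i<N. monom (c i) (s + i))"
  have "q = 0"
    using vanish by (intro cayley_moments_eq_0_imp_poly_eq_0[of q t]) (simp add: phi_combination_eq_integral q_def)
  moreover have "coeff q (s + i) = c i"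
    using \<open>i < N\<close> by (simp add: q_def coeff_sum coeff_monom)
  ultimately show ?thesis
    by simp
qed

lemma tau_nonzero: "tau s t N \<noteq> 0"
proof
  define M where "M = Matrix.mat N N (\<lambda>(i, j). mom s t i j)"
  assume "tau s t N = 0"
  then obtain v where v: "v \<in> carrier_vec N" "v \<noteq> 0\<^sub>v N" "M *\<^sub>v v = 0\<^sub>v N"
    using det_0_iff_vec_prod_zero_field[of M N] by (auto simp: tau_def M_def)
  define c where "c = vec_index v"
  have "(\<Sum>j<N. mom s t i j * c j) = vec_index (M *\<^sub>v v) i" if "i < N" for i
    using that v(1) by (simp add: M_def c_def scalar_prod_def atLeast0LessThan)
  also have "vec_index (M *\<^sub>v v) i = 0" if "i < N" for i
    using that v(3) by simp
  finally have row: "(\<Sum>j<N. mom s t i j * c j) = 0" if "i < N" for i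
    using that by simp
  have "(\<Sum>i<N. \<Sum>j<N. c i * c j * mom s t i j) = (\<Sum>i<N. c i * (\<Sum>j<N. mom s t i j * c j))"
    by (simp add: sum_distrib_left mult_ac)
  also have "\<dots> = 0"
    using row by simp
  finally have "(\<Sum>i<N. \<Sum>j<N. c i * c j * mom s t i j) = 0" .
  then have "(\<lambda>k. (\<Sum>i<N. c i * phi s (t + k) i)\<^sup>2) sums 0"
    using mom_quadratic_form_sums[where c = c and N = N and s = s and t = t] by simp
  then have "(\<Sum>i<N. c i * phi s (t + k) i)\<^sup>2 = 0" for k
    using suminf_eq_zero_iff[of "\<lambda>k. (\<Sum>i<N. c i * phi s (t + k) i)\<^sup>2"] by (auto simp: sums_iff)
  then have "c i = 0" if "i < N" for i
    by (intro phi_combination_eq_0_imp_coeff_eq_0[OF _ that]) simp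
  then have "v = 0\<^sub>v N"
    using v(1) by (intro eq_vecI) (auto simp: c_def)
  with v(2) show False ..
qed

section \<open>The recurrence\<close>

lemma tau_eq_leading_minor: "tau s t n = leading_minor (mom s t) n"
  by (simp add: tau_def leading_minor_def)

lemma sigma_eq_bordered_det: "sigma s t n = det (bordered_mat (mom s t) n (phi s t))"
  by (simp add: sigma_def bordered_mat_def)

lemma Pn_eq_bordered_det: "Pn s t n x = det (bordered_mat (mom s t) n (\<lambda>i. x ^ i)) / tau s t n"
proof (cases "n = 0")
  case True
  have "det (bordered_mat (mom s t) 0 (\<lambda>i. x ^ i)) = tau s t 0"
    by (simp add: det_bordered_mat[of 0 1] bordered_cofactor_last tau_eq_leading_minor)
  then show ?thesis
    using True tau_nonzero[of s t 0] by (simp add: Pn_def)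
next
  case False
  then show ?thesis
    by (simp add: Pn_def bordered_mat_def)
qed

theorem theorem2p9:
  fixes s t n :: nat and x :: real
  assumes "n \<ge> 1" and "sigma s t (n - 1) \<noteq> 0"
  shows "Pn s (Suc t) n x + dcoef s t n * Pn s (Suc t) (n - 1) x
         = Pn s t n x + ecoef s t n * Pn s t (n - 1) x"
proof -
  obtain m where n: "n = Suc m"
    using assms(1) by (cases n) auto
  have rank_one: "\<And>i j. mom s (Suc t) i j = mom s t i j - phi s t i * phi s t j"
    by (rule mom_Suc)
  have border: "det (bordered_mat (mom s t) m (phi s t)) \<noteq> 0"
    using assms(2) by (simp add: n sigma_eq_bordered_det)
  have "det (bordered_mat (mom s (Suc t)) n (\<lambda>i. x ^ i)) / tau s (Suc t) n
      - sigma s t n / sigma s t m / tau s (Suc t) n * det (bordered_mat (mom s (Suc t)) m (\<lambda>i. x ^ i))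
    = det (bordered_mat (mom s t) n (\<lambda>i. x ^ i)) / tau s t n
      - sigma s t n / sigma s t m / tau s t n * det (bordered_mat (mom s t) m (\<lambda>i. x ^ i))"
    using bordered_det_rank_one_recurrence[OF rank_one
        tau_nonzero[of s t n, unfolded n tau_eq_leading_minor]
        tau_nonzero[of s "Suc t" n, unfolded n tau_eq_leading_minor] border]
    by (simp add: n tau_eq_leading_minor sigma_eq_bordered_det)
  then show ?thesis
    by (simp add: n dcoef_def ecoef_def Pn_eq_bordered_det tau_nonzero)
qed

end
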